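(* Let $u$ be a smooth absolute $E_1$-minimizer on a domain of the $xy$-plane where $D\neq0$. Then $$-\alpha\,N(H)-\alpha H^2+2\alpha^2N(\theta)+\tfrac23H\,N^{\perp}N^{\perp}\theta+N^{\perp}N^{\perp}\alpha=-2\alpha\,N^{\perp}(\alpha).$$
   Context: Heisenberg group $H_1$ with contact form $\Theta=dt+x\,dy-y\,dx$; graph $t=u(x,y)$, $D=[(u_x-y)^2+(u_y+x)^2]^{1/2}$, $\cos\theta=(u_x-y)/D$, $\sin\theta=(u_y+x)/D$, $\alpha=-1/D$, $H=D^{-3}\{(u_y+x)^2u_{xx}-2(u_y+x)(u_x-y)u_{xy}+(u_x-y)^2u_{yy}\}$ (the $p$-mean curvature), $N^{\perp}=\sin\theta\,\partial_x-\cos\theta\,\partial_y$, $N=\cos\theta\,\partial_x+\sin\theta\,\partial_y$. Absolute $E_1$-minimizer: $-N^{\perp}\alpha+\frac12\alpha^2+\frac16H^2=0$ on the nonsingular domain. *)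

theory Defs
  imports "HOL-Analysis.Analysis"
begin

definition px :: "(real \<times> real \<Rightarrow> real) \<Rightarrow> real \<times> real \<Rightarrow> real" where
  "px f = (\<lambda>(x, y). deriv (\<lambda>s. f (s, y)) x)"

definition py :: "(real \<times> real \<Rightarrow> real) \<Rightarrow> real \<times> real \<Rightarrow> real" where
  "py f = (\<lambda>(x, y). deriv (\<lambda>s. f (x, s)) y)"

fun Ck_on :: "nat \<Rightarrow> (real \<times> real) set \<Rightarrow> (real \<times> real \<Rightarrow> real) \<Rightarrow> bool" where
  "Ck_on 0 \<Omega> f = continuous_on \<Omega> f"
| "Ck_on (Suc k) \<Omega> f =
     (continuous_on \<Omega> f \<and>
      (\<forall>(x, y) \<in> \<Omega>. (\<lambda>s. f (s, y)) differentiable (at x) \<and>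
                      (\<lambda>s. f (x, s)) differentiable (at y)) \<and>
      Ck_on k \<Omega> (px f) \<and> Ck_on k \<Omega> (py f))"

definition smooth_on :: "(real \<times> real) set \<Rightarrow> (real \<times> real \<Rightarrow> real) \<Rightarrow> bool" where
  "smooth_on \<Omega> f = (\<forall>k. Ck_on k \<Omega> f)"

text \<open>Quantities attached to the graph t = u(x,y) in the Heisenberg group H_1.\<close>

definition Dfun :: "(real \<times> real \<Rightarrow> real) \<Rightarrow> real \<times> real \<Rightarrow> real" where
  "Dfun u = (\<lambda>(x, y). sqrt ((px u (x, y) - y)\<^sup>2 + (py u (x, y) + x)\<^sup>2))"

definition cth :: "(real \<times> real \<Rightarrow> real) \<Rightarrow> real \<times> real \<Rightarrow> real" where
  "cth u = (\<lambda>(x, y). (px u (x, y) - y) / Dfun u (x, y))"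

definition sth :: "(real \<times> real \<Rightarrow> real) \<Rightarrow> real \<times> real \<Rightarrow> real" where
  "sth u = (\<lambda>(x, y). (py u (x, y) + x) / Dfun u (x, y))"

definition alpha :: "(real \<times> real \<Rightarrow> real) \<Rightarrow> real \<times> real \<Rightarrow> real" where
  "alpha u = (\<lambda>p. - 1 / Dfun u p)"

definition Hcurv :: "(real \<times> real \<Rightarrow> real) \<Rightarrow> real \<times> real \<Rightarrow> real" where
  "Hcurv u = (\<lambda>(x, y). (Dfun u (x, y)) powi (-3) *
      ((py u (x, y) + x)\<^sup>2 * px (px u) (x, y)
       - 2 * (py u (x, y) + x) * (px u (x, y) - y) * py (px u) (x, y)
       + (px u (x, y) - y)\<^sup>2 * py (py u) (x, y)))"

definition Nfld :: "(real \<times> real \<Rightarrow> real) \<Rightarrow> (real \<times> real \<Rightarrow> real) \<Rightarrow> real \<times> real \<Rightarrow> real" where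
  "Nfld u f = (\<lambda>p. cth u p * px f p + sth u p * py f p)"

definition Nperp :: "(real \<times> real \<Rightarrow> real) \<Rightarrow> (real \<times> real \<Rightarrow> real) \<Rightarrow> real \<times> real \<Rightarrow> real" where
  "Nperp u f = (\<lambda>p. sth u p * px f p - cth u p * py f p)"

definition abs_E1_minimizer :: "(real \<times> real) set \<Rightarrow> (real \<times> real \<Rightarrow> real) \<Rightarrow> bool" where
  "abs_E1_minimizer \<Omega> u =
     (\<forall>p \<in> \<Omega>. - Nperp u (alpha u) p + (1/2) * (alpha u p)\<^sup>2 + (1/6) * (Hcurv u p)\<^sup>2 = 0)"

end

theory Submission
  imports Defs
begin

(* Write N = (cos theta, sin theta) for the unit horizontal normal (u_x - y, u_y + x) / D and
   N^perp = (sin theta, - cos theta). Differentiating the normalised vector field gives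
   div N = H and alpha curl N = N^perp alpha - 2 alpha^2, that is N^perp theta = - H and
   alpha N theta = N^perp alpha - 2 alpha^2. For a rotating frame
   [N, N^perp] = (N theta) N + (N^perp theta) N^perp, by the symmetry of second derivatives.
   Applying this to theta, and applying N^perp to the E_1-equation N^perp alpha = alpha^2/2 + H^2/6
   and to alpha N theta = -3/2 alpha^2 + H^2/6, expresses every second-order term of the
   identity through first-order ones, and what remains is a polynomial identity. *)

section \<open>Partial derivatives in the plane\<close>

definition has_partials :: "(real \<times> real \<Rightarrow> real) \<Rightarrow> real \<times> real \<Rightarrow> bool" where
  "has_partials f p \<longleftrightarrow>
     (\<lambda>s. f (s, snd p)) differentiable (at (fst p)) \<and> (\<lambda>t. f (fst p, t)) differentiable (at (snd p))"

lemma has_partials_px: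
  "has_partials f (x, y) \<Longrightarrow> ((\<lambda>s. f (s, y)) has_real_derivative px f (x, y)) (at x)"
  by (simp add: has_partials_def px_def DERIV_deriv_iff_real_differentiable)

lemma has_partials_py:
  "has_partials f (x, y) \<Longrightarrow> ((\<lambda>t. f (x, t)) has_real_derivative py f (x, y)) (at y)"
  by (simp add: has_partials_def py_def DERIV_deriv_iff_real_differentiable)

lemma has_partialsI:
  "((\<lambda>s. f (s, y)) has_real_derivative a) (at x) \<Longrightarrow> ((\<lambda>t. f (x, t)) has_real_derivative b) (at y)
   \<Longrightarrow> has_partials f (x, y)"
  by (auto simp: has_partials_def real_differentiable_def)

lemma px_eqI: "((\<lambda>s. f (s, y)) has_real_derivative a) (at x) \<Longrightarrow> px f (x, y) = a"
  by (simp add: px_def DERIV_imp_deriv)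

lemma py_eqI: "((\<lambda>t. f (x, t)) has_real_derivative b) (at y) \<Longrightarrow> py f (x, y) = b"
  by (simp add: py_def DERIV_imp_deriv)

lemma eventually_slices_eq:
  assumes "open V" "(x, y) \<in> V" "\<And>q. q \<in> V \<Longrightarrow> f q = g q"
  shows "eventually (\<lambda>s. f (s, y) = g (s, y)) (nhds x)"
    and "eventually (\<lambda>t. f (x, t) = g (x, t)) (nhds y)"
proof -
  have "((\<lambda>s. (s, y)) \<longlongrightarrow> (x, y)) (nhds x)" "((\<lambda>t. (x, t)) \<longlongrightarrow> (x, y)) (nhds y)"
    by (auto intro!: tendsto_Pair filterlim_ident)
  then have "eventually (\<lambda>s. (s, y) \<in> V) (nhds x)" "eventually (\<lambda>t. (x, t) \<in> V) (nhds y)"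
    using assms(1,2) by (auto simp: tendsto_def)
  then show "eventually (\<lambda>s. f (s, y) = g (s, y)) (nhds x)"
    and "eventually (\<lambda>t. f (x, t) = g (x, t)) (nhds y)"
    by (auto elim!: eventually_mono simp: assms(3))
qed

lemma px_local:
  "open V \<Longrightarrow> (x, y) \<in> V \<Longrightarrow> (\<And>q. q \<in> V \<Longrightarrow> f q = g q) \<Longrightarrow> px f (x, y) = px g (x, y)"
  by (simp add: px_def deriv_cong_ev eventually_slices_eq)

lemma py_local:
  "open V \<Longrightarrow> (x, y) \<in> V \<Longrightarrow> (\<And>q. q \<in> V \<Longrightarrow> f q = g q) \<Longrightarrow> py f (x, y) = py g (x, y)"
  by (simp add: py_def deriv_cong_ev eventually_slices_eq)

lemma has_real_derivative_slices_local:
  assumes "open V" "(x, y) \<in> V" "\<And>q. q \<in> V \<Longrightarrow> f q = g q"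
  shows "((\<lambda>s. f (s, y)) has_real_derivative a) (at x) \<longleftrightarrow> ((\<lambda>s. g (s, y)) has_real_derivative a) (at x)"
    and "((\<lambda>t. f (x, t)) has_real_derivative b) (at y) \<longleftrightarrow> ((\<lambda>t. g (x, t)) has_real_derivative b) (at y)"
  using DERIV_cong_ev[OF refl eventually_slices_eq(1)[of V x y f g, OF assms] refl]
    DERIV_cong_ev[OF refl eventually_slices_eq(2)[of V x y f g, OF assms] refl] by blast+

lemma smooth_on_px: "smooth_on S f \<Longrightarrow> smooth_on S (px f)"
  unfolding smooth_on_def by (metis Ck_on.simps(2))

lemma smooth_on_py: "smooth_on S f \<Longrightarrow> smooth_on S (py f)"
  unfolding smooth_on_def by (metis Ck_on.simps(2))

lemma smooth_on_imp_continuous_on: "smooth_on S f \<Longrightarrow> continuous_on S f"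
  unfolding smooth_on_def by (metis Ck_on.simps(1))

lemma smooth_on_has_partials:
  assumes "smooth_on S f" "(x, y) \<in> S"
  shows "has_partials f (x, y)"
proof -
  have "Ck_on (Suc 0) S f"
    using assms(1) by (simp only: smooth_on_def)
  then show ?thesis
    using assms(2) by (auto simp: has_partials_def)
qed

lemma rectangle_difference_mvt:
  fixes f :: "real \<times> real \<Rightarrow> real"
  assumes "h > 0"
    and fx: "\<And>a b. a \<in> {x..x+h} \<Longrightarrow> b \<in> {y..y+h} \<Longrightarrow>
               ((\<lambda>s. f (s, b)) has_real_derivative px f (a, b)) (at a)"
    and fxy: "\<And>a b. a \<in> {x..x+h} \<Longrightarrow> b \<in> {y..y+h} \<Longrightarrow>
               ((\<lambda>t. px f (a, t)) has_real_derivative py (px f) (a, b)) (at b)"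
  obtains a b where "a \<in> {x<..<x+h}" "b \<in> {y<..<y+h}"
    "f (x+h, y+h) - f (x+h, y) - f (x, y+h) + f (x, y) = h\<^sup>2 * py (px f) (a, b)"
proof -
  have "((\<lambda>s. f (s, y+h) - f (s, y)) has_real_derivative px f (s, y+h) - px f (s, y)) (at s)"
    if "x \<le> s" "s \<le> x+h" for s
    using that \<open>h > 0\<close> by (intro derivative_intros fx) auto
  then obtain a where a: "a \<in> {x<..<x+h}"
    "(f (x+h, y+h) - f (x+h, y)) - (f (x, y+h) - f (x, y)) = h * (px f (a, y+h) - px f (a, y))"
    using MVT2[of x "x+h" "\<lambda>s. f (s, y+h) - f (s, y)" "\<lambda>s. px f (s, y+h) - px f (s, y)"]
      \<open>h > 0\<close> by auto
  obtain b where b: "b \<in> {y<..<y+h}" "px f (a, y+h) - px f (a, y) = h * py (px f) (a, b)"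
    using MVT2[of y "y+h" "\<lambda>t. px f (a, t)" "\<lambda>t. py (px f) (a, t)"] \<open>h > 0\<close> a(1) fxy
    by fastforce
  show ?thesis
    by (rule that[OF a(1) b(1)]) (use a(2) b(2) in \<open>simp add: power2_eq_square algebra_simps\<close>)
qed

lemma px_swap: "px (\<lambda>(a, b). f (b, a)) = (\<lambda>(a, b). py f (b, a))"
  and py_swap: "py (\<lambda>(a, b). f (b, a)) = (\<lambda>(a, b). px f (b, a))"
  by (simp_all add: px_def py_def)

lemma mixed_partials_near:
  assumes "open S" "smooth_on S f" "(x, y) \<in> S"
  obtains r where "r > 0" "\<And>h. 0 < h \<Longrightarrow> h < r \<Longrightarrow>
    \<exists>z z'. dist z (x, y) \<le> 2 * h \<and> dist z' (x, y) \<le> 2 * h \<and> py (px f) z = px (py f) z'"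
proof -
  obtain r where "r > 0" and r: "ball (x, y) (2 * r) \<subseteq> S"
    using openE[OF assms(1,3)] by (metis field_sum_of_halves half_gt_zero mult_2)
  have near: "dist (a, b) (x, y) \<le> 2 * h" if "a \<in> {x..x+h}" "b \<in> {y..y+h}" for a b h
  proof -
    have "dist (a, b) (x, y) \<le> \<bar>a - x\<bar> + \<bar>b - y\<bar>"
      using sqrt_sum_squares_le_sum_abs[of "a - x" "b - y"] by (simp add: dist_Pair_Pair dist_real_def)
    then show ?thesis using that by auto
  qed
  have square: "(a, b) \<in> S"
    if "a \<in> {x..x+h}" "b \<in> {y..y+h}" "0 < h" "h < r" for a b h
    using near[OF that(1,2)] that(3,4) r by (auto simp: dist_commute subset_iff)
  show ?thesis
  proof (rule that[OF \<open>r > 0\<close>])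
    fix h assume h: "0 < h" "h < r"
    define g where "g = (\<lambda>(a, b). f (b, a))"
    note fS = smooth_on_has_partials[OF assms(2)]
      and fxS = smooth_on_has_partials[OF smooth_on_px[OF assms(2)]]
      and fyS = smooth_on_has_partials[OF smooth_on_py[OF assms(2)]]
    obtain a b where ab: "a \<in> {x<..<x+h}" "b \<in> {y<..<y+h}"
      "f (x+h, y+h) - f (x+h, y) - f (x, y+h) + f (x, y) = h\<^sup>2 * py (px f) (a, b)"
      using rectangle_difference_mvt[of h x y f] h square(1)
      by (metis fS fxS has_partials_px has_partials_py)
    have "((\<lambda>s. g (s, a)) has_real_derivative px g (b, a)) (at b)"
      and "((\<lambda>t. px g (b, t)) has_real_derivative py (px g) (b, a)) (at a)"
      if "b \<in> {y..y+h}" "a \<in> {x..x+h}" for a b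
      using square[OF that(2,1) h] fS fyS
      by (auto simp: g_def px_swap py_swap intro!: has_partials_px has_partials_py)
    \<comment> \<open>the same argument for the transposed function brings in \<open>px (py f)\<close>\<close>
    then obtain b' a' where ab': "b' \<in> {y<..<y+h}" "a' \<in> {x<..<x+h}"
      "g (y+h, x+h) - g (y+h, x) - g (y, x+h) + g (y, x) = h\<^sup>2 * py (px g) (b', a')"
      using rectangle_difference_mvt[of h y x g] h(1) by blast
    have "py (px f) (a, b) = px (py f) (a', b')"
      using ab(3) ab'(3) h(1) by (simp add: g_def px_swap py_swap algebra_simps)
    with ab ab' h show "\<exists>z z'. dist z (x, y) \<le> 2 * h \<and> dist z' (x, y) \<le> 2 * h \<and> py (px f) z = px (py f) z'"
      by (metis greaterThanLessThan_iff less_imp_le atLeastAtMost_iff near)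
  qed
qed

lemma px_py_commute:
  assumes "open S" "smooth_on S f" "(x, y) \<in> S"
  shows "px (py f) (x, y) = py (px f) (x, y)"
proof (rule ccontr)
  let ?A = "py (px f) (x, y)" and ?B = "px (py f) (x, y)"
  assume "?B \<noteq> ?A"
  then have e: "dist ?A ?B / 2 > 0"
    by simp
  have "isCont (py (px f)) (x, y)" "isCont (px (py f)) (x, y)"
    using assms by (meson continuous_on_eq_continuous_at smooth_on_imp_continuous_on smooth_on_px smooth_on_py)+
  then obtain d1 d2 where "d1 > 0" "d2 > 0"
    and d1: "\<And>z. dist z (x, y) < d1 \<Longrightarrow> dist (py (px f) z) ?A < dist ?A ?B / 2"
    and d2: "\<And>z. dist z (x, y) < d2 \<Longrightarrow> dist (px (py f) z) ?B < dist ?A ?B / 2"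
    using e unfolding continuous_at_eps_delta by blast
  obtain r where "r > 0"
    and near: "\<And>h. 0 < h \<Longrightarrow> h < r \<Longrightarrow>
      \<exists>z z'. dist z (x, y) \<le> 2 * h \<and> dist z' (x, y) \<le> 2 * h \<and> py (px f) z = px (py f) z'"
    using mixed_partials_near[OF assms] by blast
  define h where "h = min r (min d1 d2) / 3"
  have h: "0 < h" "h < r" "2 * h < d1" "2 * h < d2"
    using \<open>r > 0\<close> \<open>d1 > 0\<close> \<open>d2 > 0\<close> by (auto simp: h_def)
  then obtain z z' where "dist z (x, y) < d1" "dist z' (x, y) < d2" and eq: "py (px f) z = px (py f) z'"
    using near[OF h(1,2)] by force
  then have "dist ?A ?B < dist ?A ?B"
    using d1[of z] d2[of z'] dist_triangle[of ?A ?B "py (px f) z"] by (simp add: dist_commute)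
  then show False
    by simp
qed

section \<open>Rotating frames\<close>

definition field_deriv ::
  "(real \<times> real \<Rightarrow> real) \<Rightarrow> (real \<times> real \<Rightarrow> real) \<Rightarrow> (real \<times> real \<Rightarrow> real) \<Rightarrow> real \<times> real \<Rightarrow> real"
  where "field_deriv a b f = (\<lambda>p. a p * px f p + b p * py f p)"

lemma Nfld_eq_field_deriv: "Nfld u = field_deriv (cth u) (sth u)"
  and Nperp_eq_field_deriv: "Nperp u = field_deriv (sth u) (\<lambda>p. - cth u p)"
  by (simp_all add: Nfld_def Nperp_def field_deriv_def fun_eq_iff)

lemma field_deriv_local:
  "open V \<Longrightarrow> (x, y) \<in> V \<Longrightarrow> (\<And>q. q \<in> V \<Longrightarrow> f q = g q) \<Longrightarrow>
   field_deriv a b f (x, y) = field_deriv a b g (x, y)"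
  unfolding field_deriv_def by (simp add: px_local[of V x y f g] py_local[of V x y f g])

lemma field_deriv_eqI:
  "((\<lambda>s. f (s, y)) has_real_derivative fx) (at x) \<Longrightarrow> ((\<lambda>t. f (x, t)) has_real_derivative fy) (at y) \<Longrightarrow>
   field_deriv a b f (x, y) = a (x, y) * fx + b (x, y) * fy"
  by (simp add: field_deriv_def px_eqI py_eqI)

lemma has_partials_add: "has_partials f p \<Longrightarrow> has_partials g p \<Longrightarrow> has_partials (\<lambda>q. f q + g q) p"
  and has_partials_mult: "has_partials f p \<Longrightarrow> has_partials g p \<Longrightarrow> has_partials (\<lambda>q. f q * g q) p"
  and has_partials_cmult: "has_partials f p \<Longrightarrow> has_partials (\<lambda>q. k * f q) p"
  and has_partials_power2: "has_partials f p \<Longrightarrow> has_partials (\<lambda>q. (f q)\<^sup>2) p"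
  by (simp_all add: has_partials_def)

lemma field_deriv_add:
  assumes "has_partials f (x, y)" "has_partials g (x, y)"
  shows "field_deriv a b (\<lambda>q. f q + g q) (x, y) = field_deriv a b f (x, y) + field_deriv a b g (x, y)"
  using field_deriv_eqI[OF DERIV_add[OF assms[THEN has_partials_px]] DERIV_add[OF assms[THEN has_partials_py]]]
  by (simp add: field_deriv_def algebra_simps)

lemma field_deriv_diff:
  assumes "has_partials f (x, y)" "has_partials g (x, y)"
  shows "field_deriv a b (\<lambda>q. f q - g q) (x, y) = field_deriv a b f (x, y) - field_deriv a b g (x, y)"
  using field_deriv_eqI[OF DERIV_diff[OF assms[THEN has_partials_px]] DERIV_diff[OF assms[THEN has_partials_py]]]
  by (simp add: field_deriv_def algebra_simps)

lemma field_deriv_mult: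
  assumes "has_partials f (x, y)" "has_partials g (x, y)"
  shows "field_deriv a b (\<lambda>q. f q * g q) (x, y) =
    f (x, y) * field_deriv a b g (x, y) + g (x, y) * field_deriv a b f (x, y)"
  using field_deriv_eqI[OF DERIV_mult[OF assms[THEN has_partials_px]] DERIV_mult[OF assms[THEN has_partials_py]]]
  by (simp add: field_deriv_def algebra_simps)

lemma field_deriv_power2:
  assumes "has_partials f (x, y)"
  shows "field_deriv a b (\<lambda>q. (f q)\<^sup>2) (x, y) = 2 * f (x, y) * field_deriv a b f (x, y)"
  using field_deriv_mult[OF assms assms] by (simp add: power2_eq_square)

lemma field_deriv_cmult:
  assumes "has_partials f (x, y)"
  shows "field_deriv a b (\<lambda>q. k * f q) (x, y) = k * field_deriv a b f (x, y)"
  using field_deriv_eqI[OF DERIV_cmult[OF assms[THEN has_partials_px]] DERIV_cmult[OF assms[THEN has_partials_py]]]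
  by (simp add: field_deriv_def algebra_simps)

lemma field_deriv_minus:
  assumes "has_partials f (x, y)"
  shows "field_deriv a b (\<lambda>q. - f q) (x, y) = - field_deriv a b f (x, y)"
  using field_deriv_eqI[OF DERIV_minus[OF assms[THEN has_partials_px]] DERIV_minus[OF assms[THEN has_partials_py]]]
  by (simp add: field_deriv_def algebra_simps)

locale angle_frame =
  fixes V :: "(real \<times> real) set" and \<theta> c s :: "real \<times> real \<Rightarrow> real"
  assumes open_V: "open V" and smooth_angle: "smooth_on V \<theta>"
    and cos_angle: "\<And>q. q \<in> V \<Longrightarrow> c q = cos (\<theta> q)"
    and sin_angle: "\<And>q. q \<in> V \<Longrightarrow> s q = sin (\<theta> q)"
begin

lemma has_real_derivative_frame:
  assumes "(x, y) \<in> V"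
  shows "((\<lambda>t. c (t, y)) has_real_derivative - s (x, y) * px \<theta> (x, y)) (at x)"
    and "((\<lambda>t. c (x, t)) has_real_derivative - s (x, y) * py \<theta> (x, y)) (at y)"
    and "((\<lambda>t. s (t, y)) has_real_derivative c (x, y) * px \<theta> (x, y)) (at x)"
    and "((\<lambda>t. s (x, t)) has_real_derivative c (x, y) * py \<theta> (x, y)) (at y)"
proof -
  have \<theta>: "has_partials \<theta> (x, y)"
    using smooth_on_has_partials[OF smooth_angle assms] .
  note c_local = has_real_derivative_slices_local[of V x y c "\<lambda>q. cos (\<theta> q)", OF open_V assms cos_angle]
  note s_local = has_real_derivative_slices_local[of V x y s "\<lambda>q. sin (\<theta> q)", OF open_V assms sin_angle]
  show "((\<lambda>t. c (t, y)) has_real_derivative - s (x, y) * px \<theta> (x, y)) (at x)"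
    "((\<lambda>t. c (x, t)) has_real_derivative - s (x, y) * py \<theta> (x, y)) (at y)"
    "((\<lambda>t. s (t, y)) has_real_derivative c (x, y) * px \<theta> (x, y)) (at x)"
    "((\<lambda>t. s (x, t)) has_real_derivative c (x, y) * py \<theta> (x, y)) (at y)"
    by (auto simp: c_local s_local cos_angle[OF assms] sin_angle[OF assms]
        intro!: derivative_eq_intros has_partials_px[OF \<theta>] has_partials_py[OF \<theta>])
qed

lemma has_partials_frame: "(x, y) \<in> V \<Longrightarrow> has_partials c (x, y)" "(x, y) \<in> V \<Longrightarrow> has_partials s (x, y)"
  by (meson has_partialsI has_real_derivative_frame)+

lemma field_deriv_frame:
  assumes "(x, y) \<in> V"
  shows "field_deriv a b c (x, y) = - s (x, y) * field_deriv a b \<theta> (x, y)"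
    and "field_deriv a b s (x, y) = c (x, y) * field_deriv a b \<theta> (x, y)"
  using has_real_derivative_frame[OF assms]
  by (simp_all add: field_deriv_def px_eqI py_eqI algebra_simps)

lemma frame_div:
  assumes "(x, y) \<in> V"
  shows "px c (x, y) + py s (x, y) = - field_deriv s (\<lambda>q. - c q) \<theta> (x, y)"
  using has_real_derivative_frame(1)[OF assms, THEN px_eqI] has_real_derivative_frame(4)[OF assms, THEN py_eqI]
  by (simp add: field_deriv_def algebra_simps)

lemma frame_curl:
  assumes "(x, y) \<in> V"
  shows "px s (x, y) - py c (x, y) = field_deriv c s \<theta> (x, y)"
  using has_real_derivative_frame(3)[OF assms, THEN px_eqI] has_real_derivative_frame(2)[OF assms, THEN py_eqI]
  by (simp add: field_deriv_def algebra_simps)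

lemma field_deriv_frame_derivs:
  assumes "has_partials (px f) (x, y)" "has_partials (py f) (x, y)" and xy: "(x, y) \<in> V"
  shows "field_deriv a b (field_deriv c s f) (x, y) =
      c (x, y) * field_deriv a b (px f) (x, y) + s (x, y) * field_deriv a b (py f) (x, y)
      - field_deriv a b \<theta> (x, y) * field_deriv s (\<lambda>q. - c q) f (x, y)"
    and "field_deriv a b (field_deriv s (\<lambda>q. - c q) f) (x, y) =
      s (x, y) * field_deriv a b (px f) (x, y) - c (x, y) * field_deriv a b (py f) (x, y)
      + field_deriv a b \<theta> (x, y) * field_deriv c s f (x, y)"
  unfolding field_deriv_def[of c s f] field_deriv_def[of s "\<lambda>q. - c q" f]
  using assms has_partials_frame[OF xy]
  by (simp_all add: field_deriv_add field_deriv_diff field_deriv_mult field_deriv_frame[OF xy]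
      has_partials_mult algebra_simps)

lemma frame_commutator:
  assumes f: "smooth_on V f" and xy: "(x, y) \<in> V"
  defines "N \<equiv> field_deriv c s" and "N' \<equiv> field_deriv s (\<lambda>q. - c q)"
  shows "N (N' f) (x, y) - N' (N f) (x, y) = N \<theta> (x, y) * N f (x, y) + N' \<theta> (x, y) * N' f (x, y)"
proof -
  note derivs = field_deriv_frame_derivs[OF smooth_on_has_partials[OF smooth_on_px[OF f] xy]
      smooth_on_has_partials[OF smooth_on_py[OF f] xy] xy]
  have "s (x, y) * N (px f) (x, y) - c (x, y) * N (py f) (x, y)
      - (c (x, y) * N' (px f) (x, y) + s (x, y) * N' (py f) (x, y)) = 0"
    using px_py_commute[OF open_V f xy] by (simp add: N_def N'_def field_deriv_def algebra_simps)
  then show ?thesis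
    using derivs(2)[of c s] derivs(1)[of s "\<lambda>q. - c q"] by (simp add: N_def N'_def)
qed

end

section \<open>The horizontal normal of a graph\<close>

lemma has_real_derivative_unit_vector:
  fixes f g :: "real \<Rightarrow> real"
  assumes f: "(f has_real_derivative f') (at t)" and g: "(g has_real_derivative g') (at t)"
    and nz: "sqrt ((f t)\<^sup>2 + (g t)\<^sup>2) \<noteq> 0"
  defines "D \<equiv> sqrt ((f t)\<^sup>2 + (g t)\<^sup>2)"
  shows "((\<lambda>t. f t / sqrt ((f t)\<^sup>2 + (g t)\<^sup>2)) has_real_derivative g t * (g t * f' - f t * g') / D ^ 3) (at t)"
    and "((\<lambda>t. g t / sqrt ((f t)\<^sup>2 + (g t)\<^sup>2)) has_real_derivative - f t * (g t * f' - f t * g') / D ^ 3) (at t)"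
    and "((\<lambda>t. - 1 / sqrt ((f t)\<^sup>2 + (g t)\<^sup>2)) has_real_derivative (f t * f' + g t * g') / D ^ 3) (at t)"
proof -
  have pos: "(f t)\<^sup>2 + (g t)\<^sup>2 > 0"
    using nz by (metis add_nonneg_nonneg le_less real_sqrt_zero zero_le_power2)
  have D: "D \<noteq> 0" "D\<^sup>2 = (f t)\<^sup>2 + (g t)\<^sup>2"
    using pos nz by (simp_all add: D_def)
  have sqrt: "((\<lambda>t. sqrt ((f t)\<^sup>2 + (g t)\<^sup>2)) has_real_derivative (f t * f' + g t * g') / D) (at t)"
    using pos nz by (auto intro!: derivative_eq_intros f g simp: D_def field_simps)
  have quotient: "(a * D - b * ((f t * f' + g t * g') / D)) / (D * D)
      = (a * ((f t)\<^sup>2 + (g t)\<^sup>2) - b * (f t * f' + g t * g')) / D ^ 3" for a b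
    unfolding D(2)[symmetric] using D(1) by (simp add: field_simps power2_eq_square power3_eq_cube)
  show "((\<lambda>t. f t / sqrt ((f t)\<^sup>2 + (g t)\<^sup>2)) has_real_derivative g t * (g t * f' - f t * g') / D ^ 3) (at t)"
    by (rule DERIV_cong[OF DERIV_divide[OF f sqrt nz]])
      (simp only: D_def[symmetric] quotient, simp add: power2_eq_square algebra_simps)
  show "((\<lambda>t. g t / sqrt ((f t)\<^sup>2 + (g t)\<^sup>2)) has_real_derivative - f t * (g t * f' - f t * g') / D ^ 3) (at t)"
    by (rule DERIV_cong[OF DERIV_divide[OF g sqrt nz]])
      (simp only: D_def[symmetric] quotient, simp add: power2_eq_square algebra_simps)
  show "((\<lambda>t. - 1 / sqrt ((f t)\<^sup>2 + (g t)\<^sup>2)) has_real_derivative (f t * f' + g t * g') / D ^ 3) (at t)"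
    by (rule DERIV_cong[OF DERIV_divide[OF DERIV_const sqrt nz]])
      (simp only: D_def[symmetric] quotient, simp)
qed

locale nonsingular_graph =
  fixes \<Omega> :: "(real \<times> real) set" and u :: "real \<times> real \<Rightarrow> real"
  assumes open_domain: "open \<Omega>" and smooth_graph: "smooth_on \<Omega> u"
    and nonsingular: "\<And>p. p \<in> \<Omega> \<Longrightarrow> Dfun u p \<noteq> 0"
begin

lemma has_real_derivative_graph_frame:
  assumes xy: "(x, y) \<in> \<Omega>"
  defines "P \<equiv> px u (x, y) - y" and "Q \<equiv> py u (x, y) + x" and "D \<equiv> Dfun u (x, y)"
  shows "((\<lambda>t. cth u (t, y)) has_real_derivative Q * (Q * px (px u) (x, y) - P * (px (py u) (x, y) + 1)) / D ^ 3) (at x)"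
    and "((\<lambda>t. cth u (x, t)) has_real_derivative Q * (Q * (py (px u) (x, y) - 1) - P * py (py u) (x, y)) / D ^ 3) (at y)"
    and "((\<lambda>t. sth u (t, y)) has_real_derivative - P * (Q * px (px u) (x, y) - P * (px (py u) (x, y) + 1)) / D ^ 3) (at x)"
    and "((\<lambda>t. sth u (x, t)) has_real_derivative - P * (Q * (py (px u) (x, y) - 1) - P * py (py u) (x, y)) / D ^ 3) (at y)"
    and "((\<lambda>t. alpha u (t, y)) has_real_derivative (P * px (px u) (x, y) + Q * (px (py u) (x, y) + 1)) / D ^ 3) (at x)"
    and "((\<lambda>t. alpha u (x, t)) has_real_derivative (P * (py (px u) (x, y) - 1) + Q * py (py u) (x, y)) / D ^ 3) (at y)"
proof -
  note ux = smooth_on_has_partials[OF smooth_on_px[OF smooth_graph] xy]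
    and uy = smooth_on_has_partials[OF smooth_on_py[OF smooth_graph] xy]
  have nz: "sqrt ((px u (x, y) - y)\<^sup>2 + (py u (x, y) + x)\<^sup>2) \<noteq> 0"
    using nonsingular[OF xy] by (simp add: Dfun_def)
  have "((\<lambda>t. px u (t, y) - y) has_real_derivative px (px u) (x, y)) (at x)"
    "((\<lambda>t. py u (t, y) + t) has_real_derivative px (py u) (x, y) + 1) (at x)"
    using ux uy by (auto intro!: derivative_eq_intros has_partials_px)
  note along_x = has_real_derivative_unit_vector[OF this nz]
  have "((\<lambda>t. px u (x, t) - t) has_real_derivative py (px u) (x, y) - 1) (at y)"
    "((\<lambda>t. py u (x, t) + x) has_real_derivative py (py u) (x, y)) (at y)"
    using ux uy by (auto intro!: derivative_eq_intros has_partials_py)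
  note along_y = has_real_derivative_unit_vector[OF this nz]
  show "((\<lambda>t. cth u (t, y)) has_real_derivative Q * (Q * px (px u) (x, y) - P * (px (py u) (x, y) + 1)) / D ^ 3) (at x)"
    "((\<lambda>t. sth u (t, y)) has_real_derivative - P * (Q * px (px u) (x, y) - P * (px (py u) (x, y) + 1)) / D ^ 3) (at x)"
    "((\<lambda>t. alpha u (t, y)) has_real_derivative (P * px (px u) (x, y) + Q * (px (py u) (x, y) + 1)) / D ^ 3) (at x)"
    using along_x by (simp_all add: cth_def sth_def alpha_def Dfun_def P_def Q_def D_def)
  show "((\<lambda>t. cth u (x, t)) has_real_derivative Q * (Q * (py (px u) (x, y) - 1) - P * py (py u) (x, y)) / D ^ 3) (at y)"
    "((\<lambda>t. sth u (x, t)) has_real_derivative - P * (Q * (py (px u) (x, y) - 1) - P * py (py u) (x, y)) / D ^ 3) (at y)"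
    "((\<lambda>t. alpha u (x, t)) has_real_derivative (P * (py (px u) (x, y) - 1) + Q * py (py u) (x, y)) / D ^ 3) (at y)"
    using along_y by (simp_all add: cth_def sth_def alpha_def Dfun_def P_def Q_def D_def)
qed

lemma has_partials_graph_frame:
  assumes "(x, y) \<in> \<Omega>"
  shows "has_partials (cth u) (x, y)" "has_partials (sth u) (x, y)" "has_partials (alpha u) (x, y)"
  using has_partialsI[OF has_real_derivative_graph_frame(1,2)[OF assms]]
    has_partialsI[OF has_real_derivative_graph_frame(3,4)[OF assms]]
    has_partialsI[OF has_real_derivative_graph_frame(5,6)[OF assms]] by auto

lemma Hcurv_eq_div:
  assumes xy: "(x, y) \<in> \<Omega>"
  shows "Hcurv u (x, y) = px (cth u) (x, y) + py (sth u) (x, y)"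
proof -
  have "Dfun u (x, y) powi (-3) = 1 / Dfun u (x, y) ^ 3"
    by (simp add: power_int_minus divide_inverse)
  then show ?thesis
    using has_real_derivative_graph_frame(1)[OF xy, THEN px_eqI]
      has_real_derivative_graph_frame(4)[OF xy, THEN py_eqI]
      px_py_commute[OF open_domain smooth_graph xy]
    by (simp add: Hcurv_def add_divide_distrib[symmetric] algebra_simps power2_eq_square)
qed

lemma alpha_curl:
  assumes xy: "(x, y) \<in> \<Omega>"
  shows "alpha u (x, y) * (px (sth u) (x, y) - py (cth u) (x, y)) = Nperp u (alpha u) (x, y) - 2 * (alpha u (x, y))\<^sup>2"
proof -
  define P Q D where "P = px u (x, y) - y" and "Q = py u (x, y) + x" and "D = Dfun u (x, y)"
  define a b e where "a = px (px u) (x, y)" and "b = py (px u) (x, y)" and "e = py (py u) (x, y)"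
  have D: "D \<noteq> 0" "D\<^sup>2 = P\<^sup>2 + Q\<^sup>2"
    using nonsingular[OF xy] by (simp_all add: Dfun_def P_def Q_def D_def)
  have "px (py u) (x, y) = b"
    using px_py_commute[OF open_domain smooth_graph xy] by (simp add: b_def)
  note derivs = has_real_derivative_graph_frame[OF xy, unfolded this, folded P_def Q_def D_def a_def b_def e_def]
  have frame: "cth u (x, y) = P / D" "sth u (x, y) = Q / D" "alpha u (x, y) = - 1 / D"
    by (simp_all add: cth_def sth_def alpha_def P_def Q_def D_def)
  have "alpha u (x, y) * (px (sth u) (x, y) - py (cth u) (x, y))
      = (P * Q * a - P\<^sup>2 * (b + 1) + Q\<^sup>2 * (b - 1) - P * Q * e) / D ^ 4"
    unfolding derivs(3)[THEN px_eqI] derivs(2)[THEN py_eqI] frame using D(1)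
    by (simp add: field_simps eval_nat_numeral)
  also have "\<dots> = (Q * (P * a + Q * (b + 1)) - P * (P * (b - 1) + Q * e) - 2 * D\<^sup>2) / D ^ 4"
    unfolding D(2) by (simp add: algebra_simps power2_eq_square)
  also have "\<dots> = Nperp u (alpha u) (x, y) - 2 * (alpha u (x, y))\<^sup>2"
    unfolding Nperp_def derivs(5)[THEN px_eqI] derivs(6)[THEN py_eqI] frame using D(1)
    by (simp add: field_simps eval_nat_numeral)
  finally show ?thesis .
qed

lemma has_partials_Hcurv:
  assumes xy: "(x, y) \<in> \<Omega>"
  shows "has_partials (Hcurv u) (x, y)"
proof -
  have Hcurv_alpha: "Hcurv u (a, b) = - (alpha u (a, b) ^ 3) *
      ((py u (a, b) + a)\<^sup>2 * px (px u) (a, b) - 2 * (py u (a, b) + a) * (px u (a, b) - b) * py (px u) (a, b)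
       + (px u (a, b) - b)\<^sup>2 * py (py u) (a, b))" for a b
    by (simp add: Hcurv_def alpha_def power_int_minus power_divide divide_inverse power_inverse)
  have "has_partials f (x, y)" if "smooth_on \<Omega> f" for f
    using smooth_on_has_partials[OF that xy] .
  with has_partials_graph_frame(3)[OF xy] show ?thesis
    unfolding has_partials_def Hcurv_alpha by (simp add: smooth_graph smooth_on_px smooth_on_py)
qed

end

section \<open>Absolute \<open>E\<^sub>1\<close>-minimizers\<close>

locale graph_angle = nonsingular_graph \<Omega> u + angle_frame V \<theta> "cth u" "sth u"
  for \<Omega> u V \<theta> +
  assumes subset_domain: "V \<subseteq> \<Omega>"
begin

lemma Nperp_angle: "q \<in> V \<Longrightarrow> Nperp u \<theta> q = - Hcurv u q"
  using subset_domain frame_div Hcurv_eq_div by (cases q) (force simp: Nperp_eq_field_deriv)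

lemma alpha_Nfld_angle: "q \<in> V \<Longrightarrow> alpha u q * Nfld u \<theta> q = Nperp u (alpha u) q - 2 * (alpha u q)\<^sup>2"
  using subset_domain frame_curl alpha_curl by (cases q) (force simp: Nfld_eq_field_deriv)

lemma has_partials_Nfld_angle:
  assumes xy: "(x, y) \<in> V"
  shows "has_partials (Nfld u \<theta>) (x, y)"
proof -
  have "(x, y) \<in> \<Omega>"
    using xy subset_domain by blast
  then show ?thesis
    unfolding Nfld_def
    by (intro has_partials_add has_partials_mult has_partials_graph_frame
        smooth_on_has_partials[OF smooth_on_px[OF smooth_angle] xy]
        smooth_on_has_partials[OF smooth_on_py[OF smooth_angle] xy])
qed

lemma commutator_angle:
  assumes "(x, y) \<in> V"
  shows "Nfld u (Nperp u \<theta>) (x, y) - Nperp u (Nfld u \<theta>) (x, y) = (Nfld u \<theta> (x, y))\<^sup>2 + (Hcurv u (x, y))\<^sup>2"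
  using frame_commutator[OF smooth_angle assms] Nperp_angle[OF assms]
  by (simp add: Nfld_eq_field_deriv Nperp_eq_field_deriv power2_eq_square)

lemma second_derivatives_angle:
  assumes xy: "(x, y) \<in> V"
  shows "Nfld u (Nperp u \<theta>) (x, y) = - Nfld u (Hcurv u) (x, y)"
    and "Nperp u (Nperp u \<theta>) (x, y) = - Nperp u (Hcurv u) (x, y)"
proof -
  have "has_partials (Hcurv u) (x, y)"
    using xy subset_domain has_partials_Hcurv by blast
  moreover have "field_deriv a b (Nperp u \<theta>) (x, y) = field_deriv a b (\<lambda>q. - Hcurv u q) (x, y)" for a b
    by (rule field_deriv_local[OF open_V xy Nperp_angle])
  ultimately show "Nfld u (Nperp u \<theta>) (x, y) = - Nfld u (Hcurv u) (x, y)"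
    and "Nperp u (Nperp u \<theta>) (x, y) = - Nperp u (Hcurv u) (x, y)"
    unfolding Nfld_eq_field_deriv Nperp_eq_field_deriv by (simp_all add: field_deriv_minus)
qed

context
  assumes minimizer: "abs_E1_minimizer \<Omega> u"
begin

lemma Nperp_alpha_minimizer:
  "q \<in> \<Omega> \<Longrightarrow> Nperp u (alpha u) q = 1/2 * (alpha u q)\<^sup>2 + 1/6 * (Hcurv u q)\<^sup>2"
  using minimizer unfolding abs_E1_minimizer_def by fastforce

lemma Nperp_Nperp_alpha_minimizer:
  assumes xy: "(x, y) \<in> \<Omega>"
  shows "Nperp u (Nperp u (alpha u)) (x, y)
    = alpha u (x, y) * Nperp u (alpha u) (x, y) + 1/3 * Hcurv u (x, y) * Nperp u (Hcurv u) (x, y)"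
proof -
  note partials = has_partials_graph_frame(3)[OF xy] has_partials_Hcurv[OF xy]
  have "Nperp u (Nperp u (alpha u)) (x, y)
      = field_deriv (sth u) (\<lambda>q. - cth u q) (\<lambda>q. 1/2 * (alpha u q)\<^sup>2 + 1/6 * (Hcurv u q)\<^sup>2) (x, y)"
    unfolding Nperp_eq_field_deriv
    by (rule field_deriv_local[OF open_domain xy Nperp_alpha_minimizer[unfolded Nperp_eq_field_deriv]])
  also have "\<dots> = 1/2 * (2 * alpha u (x, y) * Nperp u (alpha u) (x, y))
      + 1/6 * (2 * Hcurv u (x, y) * Nperp u (Hcurv u) (x, y))"
    unfolding Nperp_eq_field_deriv
    by (simp only: field_deriv_add field_deriv_cmult field_deriv_power2 has_partials_cmult has_partials_power2 partials)
  finally show ?thesis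
    by simp
qed

lemma Nperp_Nfld_angle_minimizer:
  assumes xy: "(x, y) \<in> V"
  shows "alpha u (x, y) * Nperp u (Nfld u \<theta>) (x, y) + Nfld u \<theta> (x, y) * Nperp u (alpha u) (x, y)
    = -3 * alpha u (x, y) * Nperp u (alpha u) (x, y) + 1/3 * Hcurv u (x, y) * Nperp u (Hcurv u) (x, y)"
proof -
  have xy\<Omega>: "(x, y) \<in> \<Omega>"
    using xy subset_domain by blast
  note partials = has_partials_graph_frame(3)[OF xy\<Omega>] has_partials_Hcurv[OF xy\<Omega>] has_partials_Nfld_angle[OF xy]
  have "alpha u q * Nfld u \<theta> q = -3/2 * (alpha u q)\<^sup>2 + 1/6 * (Hcurv u q)\<^sup>2" if "q \<in> V" for q
    using alpha_Nfld_angle[OF that] Nperp_alpha_minimizer[OF subsetD[OF subset_domain that]] by simp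
  then have "field_deriv (sth u) (\<lambda>q. - cth u q) (\<lambda>q. alpha u q * Nfld u \<theta> q) (x, y)
      = field_deriv (sth u) (\<lambda>q. - cth u q) (\<lambda>q. -3/2 * (alpha u q)\<^sup>2 + 1/6 * (Hcurv u q)\<^sup>2) (x, y)"
    by (rule field_deriv_local[OF open_V xy])
  then have "alpha u (x, y) * Nperp u (Nfld u \<theta>) (x, y) + Nfld u \<theta> (x, y) * Nperp u (alpha u) (x, y)
      = -3/2 * (2 * alpha u (x, y) * Nperp u (alpha u) (x, y)) + 1/6 * (2 * Hcurv u (x, y) * Nperp u (Hcurv u) (x, y))"
    unfolding Nperp_eq_field_deriv
    by (simp only: field_deriv_mult field_deriv_add field_deriv_cmult field_deriv_power2 has_partials_cmult
        has_partials_power2 partials)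
  then show ?thesis
    by simp
qed

lemma E1_minimizer_identity:
  assumes xy: "(x, y) \<in> V"
  shows "- alpha u (x, y) * Nfld u (Hcurv u) (x, y) - alpha u (x, y) * (Hcurv u (x, y))\<^sup>2
      + 2 * (alpha u (x, y))\<^sup>2 * Nfld u \<theta> (x, y)
      + (2/3) * Hcurv u (x, y) * Nperp u (Nperp u \<theta>) (x, y)
      + Nperp u (Nperp u (alpha u)) (x, y)
    = - 2 * alpha u (x, y) * Nperp u (alpha u) (x, y)"
proof -
  have xy\<Omega>: "(x, y) \<in> \<Omega>"
    using xy subset_domain by blast
  \<comment> \<open>Eliminating \<open>N H\<close> by the commutator and \<open>N\<^sup>\<bottom> (N \<theta>)\<close> by the product rule, the two sides
    differ by \<open>N \<theta> * (\<alpha> N \<theta> + 2 \<alpha>\<^sup>2 - N\<^sup>\<bottom> \<alpha>)\<close>, which vanishes by \<open>alpha_Nfld_angle\<close>.\<close>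
  show ?thesis
    using commutator_angle[OF xy] second_derivatives_angle[OF xy] alpha_Nfld_angle[OF xy]
      Nperp_Nfld_angle_minimizer[OF xy] Nperp_Nperp_alpha_minimizer[OF xy\<Omega>]
    by algebra
qed

end

end

theorem proposition3p2:
  fixes u :: "real \<times> real \<Rightarrow> real" and \<Omega> :: "(real \<times> real) set"
  assumes "open \<Omega>" and "connected \<Omega>"
    and "smooth_on \<Omega> u"
    and "\<forall>p \<in> \<Omega>. Dfun u p \<noteq> 0"
    and "abs_E1_minimizer \<Omega> u"
  shows "\<forall>p \<in> \<Omega>. \<forall>V (\<theta> :: real \<times> real \<Rightarrow> real).
           open V \<and> p \<in> V \<and> V \<subseteq> \<Omega> \<and> smooth_on V \<theta> \<and>
           (\<forall>q \<in> V. cos (\<theta> q) = cth u q \<and> sin (\<theta> q) = sth u q) \<longrightarrow>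
             - alpha u p * Nfld u (Hcurv u) p - alpha u p * (Hcurv u p)\<^sup>2
             + 2 * (alpha u p)\<^sup>2 * Nfld u \<theta> p
             + (2/3) * Hcurv u p * Nperp u (Nperp u \<theta>) p
             + Nperp u (Nperp u (alpha u)) p
             = - 2 * alpha u p * Nperp u (alpha u) p"
proof (intro ballI allI impI, elim conjE)
  fix p V and \<theta> :: "real \<times> real \<Rightarrow> real"
  assume "open V" "p \<in> V" "V \<subseteq> \<Omega>" "smooth_on V \<theta>"
    and "\<forall>q \<in> V. cos (\<theta> q) = cth u q \<and> sin (\<theta> q) = sth u q"
  then interpret graph_angle \<Omega> u V \<theta>
    using assms(1,3,4) by unfold_locales auto
  show "- alpha u p * Nfld u (Hcurv u) p - alpha u p * (Hcurv u p)\<^sup>2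
      + 2 * (alpha u p)\<^sup>2 * Nfld u \<theta> p + (2/3) * Hcurv u p * Nperp u (Nperp u \<theta>) p
      + Nperp u (Nperp u (alpha u)) p = - 2 * alpha u p * Nperp u (alpha u) p"
    using E1_minimizer_identity[OF assms(5)] \<open>p \<in> V\<close> by (cases p) blast
qed

end
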